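(* Let $A$ be an invertible upper-triangular real $d\times d$ matrix and $\Sigma$ a real diagonal $d\times d$ matrix. Then $${\rm Low}(A\otimes A^{-T})(1\otimes\Sigma-\Sigma\otimes1)(A^{-1}\otimes A^T){\rm Low}={\rm Low}(A\otimes A^{-T}){\rm Low}(1\otimes\Sigma-\Sigma\otimes1){\rm Low}(A^{-1}\otimes A^T){\rm Low}.$$
   Context: $\otimes$ is the Kronecker product, $1$ the identity, $A^{-T}=(A^{-1})^T$. ${\rm Low}\in\{0,1\}^{d^2\times d^2}$ is the diagonal matrix such that ${\rm Low}\,{\rm vec}(B)={\rm vec}({\rm low}(B))$ for all $B$, where ${\rm vec}$ is column-wise vectorization and ${\rm low}(B)$ is the strictly lower-triangular part of $B$. *)

theory Defs
  imports "HOL-Analysis.Analysis"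
begin

text \<open>Indices of d\<times>d^2 objects: a finite, linearly (well-)ordered index type 'n with d = CARD('n).
  Vectors of length d^2 are indexed by pairs (j, i) in lexicographic-block order: the outer
  component is the block index, the inner one the position inside the block.\<close>

text \<open>Column-wise vectorization: vec(B) at (j, i) is the entry B_{i j} (column j, row i).\<close>
definition vecc :: "('a::zero)^'n^'m \<Rightarrow> 'a^('n \<times> 'm)" where
  "vecc B = (\<chi> p. B $ snd p $ fst p)"

text \<open>Kronecker product: (A \<otimes> B)_{(i,k),(j,l)} = A_{ij} B_{kl}; this matches
  vec(B X A^T) = (A \<otimes> B) vec(X).\<close>
definition kron :: "real^'n^'n \<Rightarrow> real^'m^'m \<Rightarrow> real^('n \<times> 'm)^('n \<times> 'm)" where
  "kron A B = (\<chi> p q. A $ fst p $ fst q * B $ snd p $ snd q)"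

definition low :: "real^('n::{finite,linorder})^('n::{finite,linorder}) \<Rightarrow> real^('n::{finite,linorder})^('n::{finite,linorder})" where
  "low B = (\<chi> i j. if j < i then B $ i $ j else 0)"

definition Low :: "real^('n::{finite,linorder} \<times> 'n)^('n \<times> 'n)" where
  "Low = (\<chi> p q. if p = q \<and> fst p < snd p then 1 else 0)"

lemma Low_vecc: "Low *v vecc B = vecc (low B)"
proof -
  have "(\<Sum>q\<in>UNIV. (if p = q \<and> fst p < snd p then 1 else 0) * B $ snd q $ fst q)
        = (if fst p < snd p then B $ snd p $ fst p else 0)" for p :: "'a::{finite,linorder} \<times> 'a"
    by (auto simp: if_distrib[of "\<lambda>c. c * _"] sum.delta cong: if_cong)
  then show ?thesis
    by (simp add: vec_eq_iff matrix_vector_mult_def Low_def vecc_def low_def)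
qed

definition upper_triangular :: "real^('n::{finite,linorder})^('n::{finite,linorder}) \<Rightarrow> bool" where
  "upper_triangular A \<longleftrightarrow> (\<forall>i j. j < i \<longrightarrow> A $ i $ j = 0)"

definition diagonal_mat :: "real^'n^'n \<Rightarrow> bool" where
  "diagonal_mat S \<longleftrightarrow> (\<forall>i j. i \<noteq> j \<longrightarrow> S $ i $ j = 0)"

end

theory Submission
  imports Defs
begin

text \<open>In the basis of elementary matrices, Low and 1 \<otimes> \<Sigma> - \<Sigma> \<otimes> 1 are diagonal,
  the latter with entry \<sigma>(d) - \<sigma>(c) at the index (c, d). Since diagonal matrices commute,
  the claim reduces to D K Low = Low D K Low for D = 1 \<otimes> \<Sigma> - \<Sigma> \<otimes> 1 and
  K = A^-1 \<otimes> A^T, i.e. to (\<sigma>(d) - \<sigma>(c)) K((c,d),(e,f)) = 0 whenever e < f and d \<le> c.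
  For d = c the first factor vanishes; for d < c the entry A^-1(c,e) A(f,d) vanishes because
  A and A^-1 are both upper triangular: either e < c, or d < c \<le> e < f.\<close>

lemma permutes_finite_linorder_ge_id:
  fixes p :: "'a::linorder \<Rightarrow> 'a"
  assumes "finite S" and p: "p permutes S" and ge: "\<forall>i\<in>S. i \<le> p i"
  shows "p = id"
proof (rule ccontr)
  assume "p \<noteq> id"
  let ?E = "{i. p i \<noteq> i}"
  have "?E \<subseteq> S" using permutes_not_in[OF p] by blast
  then have fin: "finite ?E" using \<open>finite S\<close> by (rule finite_subset)
  define m where "m = Max ?E"
  have "m \<in> ?E" using \<open>p \<noteq> id\<close> fin unfolding m_def by (intro Max_in) auto
  with ge \<open>?E \<subseteq> S\<close> have "m < p m" by (auto simp: order_less_le)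
  have "p m \<notin> ?E"
    using \<open>m < p m\<close> Max_ge[OF fin, of "p m"] unfolding m_def by (meson leD)
  then have "p (p m) = p m" by simp
  then have "p m = m" using permutes_inj[OF p] by (simp add: inj_eq)
  with \<open>m < p m\<close> show False by simp
qed

lemma det_upper_triangular:
  fixes A :: "real^'n::{finite,linorder}^'n::{finite,linorder}"
  assumes "upper_triangular A"
  shows "det A = (\<Prod>i\<in>UNIV. A $ i $ i)"
proof -
  have "of_int (sign p) * (\<Prod>i\<in>UNIV. A $ i $ p i) = 0"
    if p: "p permutes UNIV" and "p \<noteq> id" for p :: "'n \<Rightarrow> 'n"
  proof -
    obtain i where "p i < i"
      using permutes_finite_linorder_ge_id[OF _ p] \<open>p \<noteq> id\<close> by (meson finite not_le)
    then show ?thesis using assms by (auto simp: upper_triangular_def)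
  qed
  then have "det A = (\<Sum>p\<in>{id}. of_int (sign p) * (\<Prod>i\<in>UNIV. A $ i $ p i))"
    unfolding det_def
    by (intro sum.mono_neutral_right) (auto simp: permutes_id finite_permutations)
  then show ?thesis by (simp add: sign_id)
qed

lemma upper_triangular_invertible_diag_nonzero:
  fixes A :: "real^'n::{finite,linorder}^'n::{finite,linorder}"
  assumes "invertible A" and "upper_triangular A"
  shows "A $ k $ k \<noteq> 0"
proof -
  have "det A \<noteq> 0" using assms(1) invertible_det_nz by blast
  then show ?thesis by (simp add: det_upper_triangular[OF assms(2)])
qed

lemma matrix_inv_left:
  assumes "invertible A"
  shows "matrix_inv A ** A = mat 1"
  using assms unfolding invertible_def matrix_inv_def by (rule someI_ex[THEN conjunct2])

lemma upper_triangular_matrix_inv: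
  fixes A :: "real^'n::{finite,linorder}^'n::{finite,linorder}"
  assumes inv: "invertible A" and up: "upper_triangular A"
  shows "upper_triangular (matrix_inv A)"
  unfolding upper_triangular_def
proof (intro allI impI, rule ccontr)
  fix c e :: 'n
  let ?B = "matrix_inv A"
  assume "e < c" and "?B $ c $ e \<noteq> 0"
  txt \<open>For the first nonzero entry m < c in row c of A^-1, the entry (c, m) of A^-1 A
    reduces to A^-1(c,m) A(m,m) \<noteq> 0.\<close>
  let ?E = "{k. k < c \<and> ?B $ c $ k \<noteq> 0}"
  define m where "m = Min ?E"
  have "m \<in> ?E" using \<open>e < c\<close> \<open>?B $ c $ e \<noteq> 0\<close> unfolding m_def by (intro Min_in) auto
  have before_m: "?B $ c $ k = 0" if "k < m" for k
  proof (rule ccontr)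
    assume "?B $ c $ k \<noteq> 0"
    with \<open>k < m\<close> \<open>m \<in> ?E\<close> have "k \<in> ?E" by auto
    then have "m \<le> k" unfolding m_def by (simp add: Min_le)
    with \<open>k < m\<close> show False by simp
  qed
  have "(\<Sum>k\<in>UNIV. ?B $ c $ k * A $ k $ m) = ?B $ c $ m * A $ m $ m"
  proof -
    have "?B $ c $ k * A $ k $ m = 0" if "k \<noteq> m" for k
      using that before_m up by (cases "k < m") (auto simp: upper_triangular_def)
    then have "(\<Sum>k\<in>UNIV. ?B $ c $ k * A $ k $ m) = (\<Sum>k\<in>{m}. ?B $ c $ k * A $ k $ m)"
      by (intro sum.mono_neutral_right) auto
    then show ?thesis by simp
  qed
  moreover have "(?B ** A) $ c $ m = 0"
    using matrix_inv_left[OF inv] \<open>m \<in> ?E\<close> by (auto simp: mat_def)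
  ultimately show False
    using \<open>m \<in> ?E\<close> upper_triangular_invertible_diag_nonzero[OF inv up, of m]
    by (simp add: matrix_matrix_mult_def)
qed

lemma kron_upper_triangular_transpose_eq_0:
  assumes "upper_triangular B" and "upper_triangular A" and "e < f" and "d < c"
  shows "kron B (transpose A) $ (c, d) $ (e, f) = 0"
  using assms by (cases "e < c") (auto simp: kron_def transpose_def upper_triangular_def)

definition diag_mat :: "('a \<Rightarrow> 'b::semiring_1) \<Rightarrow> 'b^'a^'a" where
  "diag_mat f = (\<chi> p q. if p = q then f p else 0)"

lemma diag_mat_mult_left: "diag_mat f ** X = (\<chi> p q. f p * X $ p $ q)"
  by (simp add: vec_eq_iff matrix_matrix_mult_def diag_mat_def if_distrib[of "\<lambda>c. c * _"]
      cong: if_cong)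

lemma diag_mat_mult_right: "X ** diag_mat f = (\<chi> p q. X $ p $ q * f q)"
  by (simp add: vec_eq_iff matrix_matrix_mult_def diag_mat_def if_distrib[of "\<lambda>c. _ * c"]
      cong: if_cong)

lemma diag_mat_mult_diag_mat: "diag_mat f ** diag_mat g = diag_mat (\<lambda>p. f p * g p)"
  unfolding diag_mat_mult_left by (simp add: vec_eq_iff diag_mat_def)

lemma diag_mat_sandwich_cong:
  assumes "\<And>p q. l q \<noteq> 0 \<Longrightarrow> K $ p $ q \<noteq> 0 \<Longrightarrow> f p = g p"
  shows "diag_mat f ** K ** diag_mat l = diag_mat g ** K ** diag_mat l"
proof -
  have "f p * K $ p $ q * l q = g p * K $ p $ q * l q" for p q
    using assms[of q p] by (cases "l q = 0 \<or> K $ p $ q = 0") auto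
  then show ?thesis by (simp add: diag_mat_mult_left diag_mat_mult_right vec_eq_iff)
qed

lemma Low_eq_diag_mat: "Low = diag_mat (\<lambda>p. if fst p < snd p then 1 else 0)"
  by (simp add: Low_def diag_mat_def vec_eq_iff)

lemma kron_commutator_diagonal:
  assumes "diagonal_mat S"
  shows "kron (mat 1) S - kron S (mat 1) = diag_mat (\<lambda>p. S $ snd p $ snd p - S $ fst p $ fst p)"
  using assms by (auto simp: diagonal_mat_def kron_def diag_mat_def vec_eq_iff mat_def prod_eq_iff)

lemma Low_kron_commutator_Low:
  assumes "diagonal_mat S"
  shows "Low ** (kron (mat 1) S - kron S (mat 1)) ** Low = Low ** (kron (mat 1) S - kron S (mat 1))"
  unfolding Low_eq_diag_mat kron_commutator_diagonal[OF assms] diag_mat_mult_diag_mat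
  by (rule arg_cong[where f = diag_mat]) (simp add: fun_eq_iff)

lemma kron_commutator_mult_kron_upper_triangular_Low:
  fixes A B S :: "real^('n::{finite,linorder})^('n::{finite,linorder})"
  assumes "upper_triangular B" and "upper_triangular A" and "diagonal_mat S"
  shows "(kron (mat 1) S - kron S (mat 1)) ** kron B (transpose A) ** Low
       = Low ** (kron (mat 1) S - kron S (mat 1)) ** kron B (transpose A) ** Low"
  unfolding kron_commutator_diagonal[OF assms(3)] Low_eq_diag_mat diag_mat_mult_diag_mat
proof (rule diag_mat_sandwich_cong)
  fix p q :: "'n \<times> 'n"
  assume Low_q: "(if fst q < snd q then 1 else 0) \<noteq> (0::real)"
    and K_pq: "kron B (transpose A) $ p $ q \<noteq> 0"
  obtain c d e f where pq: "p = (c, d)" "q = (e, f)" by fastforce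
  have "e < f" using Low_q pq by (simp split: if_splits)
  consider "c < d" | "c = d" | "d < c" by fastforce
  then show "S $ snd p $ snd p - S $ fst p $ fst p
      = (if fst p < snd p then 1 else 0) * (S $ snd p $ snd p - S $ fst p $ fst p)"
  proof cases
    case 3
    with K_pq show ?thesis
      using kron_upper_triangular_transpose_eq_0[OF assms(1,2) \<open>e < f\<close>] pq by simp
  qed (simp_all add: pq)
qed

theorem lemma7:
  fixes A S :: "real^('n::{finite,linorder})^('n::{finite,linorder})"
  assumes "invertible A" and "upper_triangular A" and "diagonal_mat S"
  shows "Low ** kron A (transpose (matrix_inv A))
           ** (kron (mat 1) S - kron S (mat 1))
           ** kron (matrix_inv A) (transpose A) ** Low
       = Low ** kron A (transpose (matrix_inv A)) ** Low
           ** (kron (mat 1) S - kron S (mat 1)) ** Low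
           ** kron (matrix_inv A) (transpose A) ** Low"
proof -
  let ?D = "kron (mat 1) S - kron S (mat 1)"
  let ?K = "kron (matrix_inv A) (transpose A)"
  let ?K' = "kron A (transpose (matrix_inv A))"
  have D_K_Low: "?D ** ?K ** Low = Low ** ?D ** ?K ** Low"
    using upper_triangular_matrix_inv[OF assms(1,2)] assms(2,3)
    by (rule kron_commutator_mult_kron_upper_triangular_Low)
  have Low_D_Low: "Low ** ?D ** Low = Low ** ?D"
    using assms(3) by (rule Low_kron_commutator_Low)
  have "Low ** ?K' ** Low ** ?D ** Low ** ?K ** Low = Low ** ?K' ** ((Low ** ?D ** Low) ** ?K ** Low)"
    by (simp add: matrix_mul_assoc)
  also have "\<dots> = Low ** ?K' ** (?D ** ?K ** Low)"
    by (simp only: Low_D_Low D_K_Low)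
  also have "\<dots> = Low ** ?K' ** ?D ** ?K ** Low"
    by (simp add: matrix_mul_assoc)
  finally show ?thesis by (rule sym)
qed

end
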